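(* Let $k\ge 1$ be an integer and let $G$ be a graph with minimum degree $\delta(G)\ge k$. Then $G$ has a total $k$-coalition partition.
   Context: All graphs are finite, simple and connected. $N(v)$ denotes the open neighborhood of a vertex $v$. For a graph $G$ with $\delta(G)\ge k$, a set $S\subseteq V(G)$ is a total $k$-dominating set if $|N(v)\cap S|\ge k$ for every $v\in V(G)$. Two disjoint sets $U,W\subseteq V(G)$ form a total $k$-coalition if neither $U$ nor $W$ is a total $k$-dominating set, but $U\cup W$ is a total $k$-dominating set. A total $k$-coalition partition of $G$ is a partition $\Omega=\{V_1,\dots,V_{|\Omega|}\}$ of $V(G)$ such that every $V_i$ forms a total $k$-coalition with some other set $V_j\in\Omega$. *)

theory Defs
  imports Main
begin

definition simple_graph :: "'a set \<Rightarrow> ('a \<Rightarrow> 'a \<Rightarrow> bool) \<Rightarrow> bool" where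
  "simple_graph V E \<longleftrightarrow> finite V \<and> V \<noteq> {} \<and>
     (\<forall>u v. E u v \<longrightarrow> u \<in> V \<and> v \<in> V) \<and>
     (\<forall>u v. E u v \<longrightarrow> E v u) \<and> (\<forall>v. \<not> E v v)"

definition connected_graph :: "'a set \<Rightarrow> ('a \<Rightarrow> 'a \<Rightarrow> bool) \<Rightarrow> bool" where
  "connected_graph V E \<longleftrightarrow> simple_graph V E \<and> (\<forall>u\<in>V. \<forall>v\<in>V. E\<^sup>*\<^sup>* u v)"

definition nbhd :: "('a \<Rightarrow> 'a \<Rightarrow> bool) \<Rightarrow> 'a \<Rightarrow> 'a set" where
  "nbhd E v = {u. E v u}"

definition min_degree_ge :: "'a set \<Rightarrow> ('a \<Rightarrow> 'a \<Rightarrow> bool) \<Rightarrow> nat \<Rightarrow> bool" where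
  "min_degree_ge V E k \<longleftrightarrow> (\<forall>v\<in>V. card (nbhd E v) \<ge> k)"

definition total_k_dominating :: "'a set \<Rightarrow> ('a \<Rightarrow> 'a \<Rightarrow> bool) \<Rightarrow> nat \<Rightarrow> 'a set \<Rightarrow> bool" where
  "total_k_dominating V E k S \<longleftrightarrow> S \<subseteq> V \<and> (\<forall>v\<in>V. card (nbhd E v \<inter> S) \<ge> k)"

definition total_k_coalition :: "'a set \<Rightarrow> ('a \<Rightarrow> 'a \<Rightarrow> bool) \<Rightarrow> nat \<Rightarrow> 'a set \<Rightarrow> 'a set \<Rightarrow> bool" where
  "total_k_coalition V E k U W \<longleftrightarrow> U \<inter> W = {} \<and>
     \<not> total_k_dominating V E k U \<and> \<not> total_k_dominating V E k W \<and>
     total_k_dominating V E k (U \<union> W)"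

definition is_partition :: "'a set \<Rightarrow> 'a set set \<Rightarrow> bool" where
  "is_partition V P \<longleftrightarrow> \<Union>P = V \<and> {} \<notin> P \<and>
     (\<forall>X\<in>P. \<forall>Y\<in>P. X \<noteq> Y \<longrightarrow> X \<inter> Y = {})"

definition total_k_coalition_partition ::
  "'a set \<Rightarrow> ('a \<Rightarrow> 'a \<Rightarrow> bool) \<Rightarrow> nat \<Rightarrow> 'a set set \<Rightarrow> bool" where
  "total_k_coalition_partition V E k P \<longleftrightarrow> is_partition V P \<and>
     (\<forall>X\<in>P. \<exists>Y\<in>P. Y \<noteq> X \<and> total_k_coalition V E k X Y)"

end

theory Submission
  imports Defs
begin

text \<open>Among all partitions of V into blocks that are not total k-dominating (the partition
into singletons is one, as no vertex is its own neighbour), take one with the fewest blocks.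
Merging two of its blocks gives a partition with fewer blocks, so the union of any two blocks
must be total k-dominating; and there are at least two blocks, since V itself is total
k-dominating by the degree condition.\<close>

lemma is_partition_singletons: "is_partition V ((\<lambda>v. {v}) ` V)"
  unfolding is_partition_def by auto

lemma finite_partition:
  assumes "finite V" and "is_partition V P"
  shows "finite P"
proof -
  have "P \<subseteq> Pow V" using assms(2) by (auto simp: is_partition_def)
  then show ?thesis using assms(1) by (meson finite_Pow_iff finite_subset)
qed

lemma is_partition_merge:
  assumes "is_partition V P" and "X \<in> P" and "Y \<in> P"
  shows "is_partition V (insert (X \<union> Y) (P - {X, Y}))"
  unfolding is_partition_def
proof (intro conjI ballI impI)
  have disj: "A \<inter> B = {}" if "A \<in> P" "B \<in> P" "A \<noteq> B" for A B
    using assms(1) that by (auto simp: is_partition_def)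
  show "\<Union> (insert (X \<union> Y) (P - {X, Y})) = V"
    using assms by (auto simp: is_partition_def)
  show "{} \<notin> insert (X \<union> Y) (P - {X, Y})"
    using assms by (auto simp: is_partition_def)
  fix A B assume "A \<in> insert (X \<union> Y) (P - {X, Y})" "B \<in> insert (X \<union> Y) (P - {X, Y})" "A \<noteq> B"
  then show "A \<inter> B = {}"
    using disj assms(2,3) by (smt (verit) Diff_iff Int_Un_distrib Int_Un_distrib2 Un_empty insert_iff)
qed

lemma card_merge_less:
  assumes "finite P" and "X \<in> P" and "Y \<in> P" and "X \<noteq> Y"
  shows "card (insert (X \<union> Y) (P - {X, Y})) < card P"
proof -
  have "card (insert (X \<union> Y) (P - {X, Y})) \<le> Suc (card (P - {X, Y}))"
    using assms(1) by (simp add: card_insert_if)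
  also have "card (P - {X, Y}) = card P - 2"
    using assms by (simp add: card_Diff_subset)
  also have "card P \<ge> 2"
    using assms card_mono[of P "{X, Y}"] by simp
  ultimately show ?thesis by linarith
qed

lemma exists_partition_pairwise_joins:
  fixes D :: "'a set \<Rightarrow> bool"
  assumes "finite V" and "D V" and "\<And>v. v \<in> V \<Longrightarrow> \<not> D {v}"
  shows "\<exists>P. is_partition V P \<and> (\<forall>X\<in>P. \<not> D X) \<and> (\<forall>X\<in>P. \<exists>Y\<in>P. Y \<noteq> X)
           \<and> (\<forall>X\<in>P. \<forall>Y\<in>P. X \<noteq> Y \<longrightarrow> D (X \<union> Y))"
proof -
  define admissible where "admissible P \<longleftrightarrow> is_partition V P \<and> (\<forall>X\<in>P. \<not> D X)" for P
  have "admissible ((\<lambda>v. {v}) ` V)"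
    using assms(3) is_partition_singletons by (auto simp: admissible_def)
  then obtain P where P: "admissible P" and least: "\<And>P'. admissible P' \<Longrightarrow> card P \<le> card P'"
    using ex_has_least_nat[of admissible _ card] by metis
  have part: "is_partition V P" and blocks: "\<forall>X\<in>P. \<not> D X"
    using P by (auto simp: admissible_def)
  have joins: "D (X \<union> Y)" if "X \<in> P" "Y \<in> P" "X \<noteq> Y" for X Y
  proof (rule ccontr)
    assume "\<not> D (X \<union> Y)"
    then have "admissible (insert (X \<union> Y) (P - {X, Y}))"
      using blocks is_partition_merge[OF part that(1,2)] by (auto simp: admissible_def)
    moreover have "card (insert (X \<union> Y) (P - {X, Y})) < card P"
      using card_merge_less finite_partition[OF assms(1) part] that by blast
    ultimately show False using least by fastforce
  qed
  have "\<exists>Y\<in>P. Y \<noteq> X" if "X \<in> P" for X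
  proof (rule ccontr)
    assume "\<not> (\<exists>Y\<in>P. Y \<noteq> X)"
    then have "\<Union>P \<subseteq> X" by blast
    then have "X = V" using part that by (auto simp: is_partition_def)
    then show False using blocks assms(2) that by blast
  qed
  then show ?thesis using part blocks joins by blast
qed

lemma total_k_dominating_vertex_set:
  assumes "simple_graph V E" and "min_degree_ge V E k"
  shows "total_k_dominating V E k V"
proof -
  have "nbhd E v \<inter> V = nbhd E v" for v
    using assms(1) by (auto simp: simple_graph_def nbhd_def)
  then show ?thesis using assms(2) by (simp add: total_k_dominating_def min_degree_ge_def)
qed

lemma not_total_k_dominating_singleton:
  assumes "simple_graph V E" and "k \<ge> 1" and "v \<in> V"
  shows "\<not> total_k_dominating V E k {v}"
proof -
  have "nbhd E v \<inter> {v} = {}" using assms(1) by (auto simp: simple_graph_def nbhd_def)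
  then show ?thesis using assms(2,3) unfolding total_k_dominating_def by force
qed

theorem proposition2p1:
  fixes V :: "'a set" and E :: "'a \<Rightarrow> 'a \<Rightarrow> bool" and k :: nat
  assumes "k \<ge> 1"
    and "connected_graph V E"
    and "min_degree_ge V E k"
  shows "\<exists>P. total_k_coalition_partition V E k P"
proof -
  have graph: "simple_graph V E" using assms(2) by (simp add: connected_graph_def)
  then have "finite V" by (simp add: simple_graph_def)
  then obtain P where part: "is_partition V P"
    and blocks: "\<forall>X\<in>P. \<not> total_k_dominating V E k X"
    and other: "\<forall>X\<in>P. \<exists>Y\<in>P. Y \<noteq> X"
    and joins: "\<forall>X\<in>P. \<forall>Y\<in>P. X \<noteq> Y \<longrightarrow> total_k_dominating V E k (X \<union> Y)"
    using exists_partition_pairwise_joins[of V "total_k_dominating V E k"]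
      total_k_dominating_vertex_set[OF graph assms(3)]
      not_total_k_dominating_singleton[OF graph assms(1)]
    by blast
  have "X \<inter> Y = {}" if "X \<in> P" "Y \<in> P" "X \<noteq> Y" for X Y
    using part that by (auto simp: is_partition_def)
  then have "total_k_coalition_partition V E k P"
    using part blocks other joins
    unfolding total_k_coalition_partition_def total_k_coalition_def by metis
  then show ?thesis ..
qed

end
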